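(* Let $p$ be a prime, let $C_p\le S_p$ be cyclic of order $p$ acting regularly, and let $k\ge1$. Let $\Omega=\overline{C_p}^k\subseteq\{0,1\}^{kp^2}$. Let $Q=C_p^k$ act on $\Omega$ by $(x_1,\dots,x_k)(M_1,\dots,M_k)=(\overline{x_1}M_1,\dots,\overline{x_k}M_k)$. This is induced by a faithful permutation of the $kp^2$ coordinates, so $Q\le S_{kp^2}$. Let $P=\{(x_1,\dots,x_k)\in C_p^k: x_1x_2\cdots x_k=1\}$. Then $\beta_{Q,\Omega,d}(P,P)\ge p^{d(k^{1/d}-1)}$ for all $d\ge1$, and $\beta_{Q,\Omega}(P,P)\ge p^{\log_2 k}$.
   Context: $\overline{x}$ denotes the permutation matrix of a permutation $x$, and $\overline{C_p}$ is the set of these matrices for $x\in C_p$. General framework. Let $Q\le S_m$ act on $\{0,1\}^m$ by permuting coordinates, and let $\Omega\subseteq\{0,1\}^m$ be $Q$-invariant. For $f$ on $\Omega$, $\mathrm{Stab}_Q(f)=\{\pi\in Q: f(\pi x)=f(x)\ \forall x\in\Omega\}$. $\mathcal B_{Q,\Omega}$ is the set of $\mathrm{Stab}_Q(f)$ for $f:\Omega\to\{0,1\}$, and $\mathcal N_{Q,\Omega}$ is the set of $\mathrm{Stab}_Q(f)$ for $f:\Omega\to\mathbb N$. Let $\chi_i(x)=x_i$. For $H\le K\le Q$ with $K\in\mathcal B_{Q,\Omega}$, define $\beta_{Q,\Omega,d}(H,K)\in\mathbb N\cup\{\infty\}$ inductively. First, $\beta_{Q,\Omega,0}(H,K)$ equals: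 - $0$ if $H=Q$; - $1$ if $H<Q$ and $H=\mathrm{Stab}_Q(\chi_i|_\Omega)$ for some $i$; - $\infty$ otherwise. For $d\ge1$, $\beta_{Q,\Omega,d}(H,K)=\min\max_{i\in[r]}[H_i:H_i\cap U_i]\,\beta_{Q,\Omega,d-1}(U_i,V_i)$. The minimum is over tuples $(r,(H_i),(U_i),(L_i),(V_i))$ with $r\in\mathbb N$, $H_i,U_i\le Q$, $L_i\in\mathcal N_{Q,\Omega}$ and $V_i\in\mathcal B_{Q,\Omega}$ such that: - (a) $U_i\le V_i$ and $H_i\le L_i$; - (b) $\bigcap_i H_i=H$; - (c) $\bigcap_i L_i\le K$; - (d) $\bigcap_{h\in H_i}h^{-1}U_ih\le H_i$; - (e) $\bigcap_{h\in H_i}h^{-1}V_ih\le L_i$. Finally, $\beta_{Q,\Omega}(H,K)=\lim_{d\to\infty}\beta_{Q,\Omega,d}(H,K)$. *)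

theory Defs
  imports "HOL-Analysis.Analysis" "HOL-Library.Extended_Real"
begin

text \<open>Coordinates are elements of a finite index set I (of type 'c); points of
  {0,1}^I are functions 'c \<Rightarrow> bool; permutations of coordinates are
  functions 'c \<Rightarrow> 'c.\<close>

definition act :: "('c \<Rightarrow> 'c) \<Rightarrow> ('c \<Rightarrow> bool) \<Rightarrow> ('c \<Rightarrow> bool)" where
  "act \<pi> x = x \<circ> inv \<pi>"

definition subgrp :: "('c \<Rightarrow> 'c) set \<Rightarrow> ('c \<Rightarrow> 'c) set \<Rightarrow> bool" where
  "subgrp H Q \<longleftrightarrow> H \<subseteq> Q \<and> id \<in> H \<and> (\<forall>a\<in>H. \<forall>b\<in>H. a \<circ> b \<in> H) \<and> (\<forall>a\<in>H. inv a \<in> H)"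

definition Stab :: "('c \<Rightarrow> 'c) set \<Rightarrow> ('c \<Rightarrow> bool) set \<Rightarrow> (('c \<Rightarrow> bool) \<Rightarrow> 'b) \<Rightarrow> ('c \<Rightarrow> 'c) set" where
  "Stab Q \<Omega> f = {\<pi> \<in> Q. \<forall>x\<in>\<Omega>. f (act \<pi> x) = f x}"

definition Bset :: "('c \<Rightarrow> 'c) set \<Rightarrow> ('c \<Rightarrow> bool) set \<Rightarrow> ('c \<Rightarrow> 'c) set set" where
  "Bset Q \<Omega> = {Stab Q \<Omega> f | f :: ('c \<Rightarrow> bool) \<Rightarrow> bool. True}"

definition Nset :: "('c \<Rightarrow> 'c) set \<Rightarrow> ('c \<Rightarrow> bool) set \<Rightarrow> ('c \<Rightarrow> 'c) set set" where
  "Nset Q \<Omega> = {Stab Q \<Omega> f | f :: ('c \<Rightarrow> bool) \<Rightarrow> nat. True}"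

definition conj_core :: "('c \<Rightarrow> 'c) set \<Rightarrow> ('c \<Rightarrow> 'c) set \<Rightarrow> ('c \<Rightarrow> 'c) set" where
  "conj_core H U = (\<Inter>h\<in>H. (\<lambda>u. inv h \<circ> u \<circ> h) ` U)"

definition idx :: "('c \<Rightarrow> 'c) set \<Rightarrow> ('c \<Rightarrow> 'c) set \<Rightarrow> nat" where
  "idx H U = card H div card (H \<inter> U)"

text \<open>Admissible tuples (r, (H_i), (U_i), (L_i), (V_i)) for \<beta>_d(H,K), d \<ge> 1, indices i < r.
  Intersections of families are taken inside Q (so the empty intersection is Q).\<close>
definition admissible ::
  "('c \<Rightarrow> 'c) set \<Rightarrow> ('c \<Rightarrow> bool) set \<Rightarrow> ('c \<Rightarrow> 'c) set \<Rightarrow> ('c \<Rightarrow> 'c) set \<Rightarrow>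
   nat \<times> (nat \<Rightarrow> ('c \<Rightarrow> 'c) set) \<times> (nat \<Rightarrow> ('c \<Rightarrow> 'c) set) \<times> (nat \<Rightarrow> ('c \<Rightarrow> 'c) set) \<times> (nat \<Rightarrow> ('c \<Rightarrow> 'c) set) \<Rightarrow> bool" where
  "admissible Q \<Omega> H K t = (case t of (r, Hs, Us, Ls, Vs) \<Rightarrow>
     (\<forall>i<r. subgrp (Hs i) Q \<and> subgrp (Us i) Q \<and> Ls i \<in> Nset Q \<Omega> \<and> Vs i \<in> Bset Q \<Omega>
            \<and> Us i \<subseteq> Vs i \<and> Hs i \<subseteq> Ls i
            \<and> conj_core (Hs i) (Us i) \<subseteq> Hs i
            \<and> conj_core (Hs i) (Vs i) \<subseteq> Ls i)
     \<and> Q \<inter> (\<Inter>i\<in>{..<r}. Hs i) = H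
     \<and> Q \<inter> (\<Inter>i\<in>{..<r}. Ls i) \<subseteq> K)"

primrec beta :: "'c set \<Rightarrow> ('c \<Rightarrow> 'c) set \<Rightarrow> ('c \<Rightarrow> bool) set \<Rightarrow> nat \<Rightarrow>
    ('c \<Rightarrow> 'c) set \<Rightarrow> ('c \<Rightarrow> 'c) set \<Rightarrow> enat" where
  "beta I Q \<Omega> 0 H K =
     (if H = Q then 0
      else if H \<subset> Q \<and> (\<exists>i\<in>I. H = Stab Q \<Omega> (\<lambda>x. x i)) then 1
      else \<infinity>)"
| "beta I Q \<Omega> (Suc d) H K =
     (INF t \<in> {t. admissible Q \<Omega> H K t}.
        (case t of (r, Hs, Us, Ls, Vs) \<Rightarrow>
          (SUP i\<in>{..<r}. enat (idx (Hs i) (Us i)) * beta I Q \<Omega> d (Us i) (Vs i))))"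

definition beta_lim :: "'c set \<Rightarrow> ('c \<Rightarrow> 'c) set \<Rightarrow> ('c \<Rightarrow> bool) set \<Rightarrow>
    ('c \<Rightarrow> 'c) set \<Rightarrow> ('c \<Rightarrow> 'c) set \<Rightarrow> enat" where
  "beta_lim I Q \<Omega> H K = lim (\<lambda>d. beta I Q \<Omega> d H K)"

text \<open>Coordinates of {0,1}^{k p^2}: triples (j,a,b) with j<k, a<p, b<p
  (entry (a,b) of the j-th p\<times>p matrix).\<close>
definition coords :: "nat \<Rightarrow> nat \<Rightarrow> (nat \<times> nat \<times> nat) set" where
  "coords k p = {..<k} \<times> {..<p} \<times> {..<p}"

text \<open>Permutation matrix of x (a permutation of {0..<p}): entry (a,b) is 1 iff a = x b.
  The point (M_1,...,M_k) with M_j = matrix of x_j.\<close>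
definition pmats :: "nat \<Rightarrow> nat \<Rightarrow> (nat \<Rightarrow> nat \<Rightarrow> nat) \<Rightarrow> (nat \<times> nat \<times> nat \<Rightarrow> bool)" where
  "pmats k p x = (\<lambda>(j, a, b). j < k \<and> a < p \<and> b < p \<and> a = x j b)"

definition Omega :: "nat \<Rightarrow> nat \<Rightarrow> (nat \<Rightarrow> nat) set \<Rightarrow> (nat \<times> nat \<times> nat \<Rightarrow> bool) set" where
  "Omega k p Cp = {pmats k p x | x. \<forall>j<k. x j \<in> Cp}"

text \<open>Coordinate permutation induced by (x_1,...,x_k): left multiplication of M_j by the
  matrix of x_j moves entry (a,b) of M_j to (x_j a, b).\<close>
definition qperm :: "nat \<Rightarrow> nat \<Rightarrow> (nat \<Rightarrow> nat \<Rightarrow> nat) \<Rightarrow> (nat \<times> nat \<times> nat \<Rightarrow> nat \<times> nat \<times> nat)" where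
  "qperm k p x = (\<lambda>(j, a, b). if j < k \<and> a < p \<and> b < p then (j, x j a, b) else (j, a, b))"

definition Qgrp :: "nat \<Rightarrow> nat \<Rightarrow> (nat \<Rightarrow> nat) set \<Rightarrow> (nat \<times> nat \<times> nat \<Rightarrow> nat \<times> nat \<times> nat) set" where
  "Qgrp k p Cp = {qperm k p x | x. \<forall>j<k. x j \<in> Cp}"

definition Pgrp :: "nat \<Rightarrow> nat \<Rightarrow> (nat \<Rightarrow> nat) set \<Rightarrow> (nat \<times> nat \<times> nat \<Rightarrow> nat \<times> nat \<times> nat) set" where
  "Pgrp k p Cp = {qperm k p x | x. (\<forall>j<k. x j \<in> Cp) \<and> foldr (\<circ>) (map x [0..<k]) id = id}"

end

(*
  For a subgroup H of the abelian group Q = C_p^k, say that H has certificate complexity at most t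
  if every x in Q - H is kept out of H by at most t of its k components (blocks): no element of H
  agrees with x on those blocks.

  Because Q is abelian, every admissible tuple has U_i <= H_i with [H_i : U_i] = p^e. A proper
  coordinate stabiliser is the kernel of a single block, so it is certified by one block.
  Passing from U to an overgroup of index p^e multiplies the certificate size by at most e + 1:
  if some s in H agrees with x on a certificate B for U, then s^-1 x lies outside the proper
  subgroup (elements of H trivial on B) * U, and one recurses there. Intersections do not increase
  the complexity. By induction on d, beta_d(H, K) <= N thus yields a certificate bound
  prod_l (1 + e_l) with p^(sum_l e_l) <= N.

  Membership in P cannot be certified by fewer than k blocks, since changing any single block can
  restore the product x_1 ... x_k = 1. Hence k <= prod_l (1 + e_l), and AM-GM, resp. 1 + e <= 2^e,
  give sum_l e_l >= d (k^(1/d) - 1), resp. sum_l e_l >= log_2 k.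
*)

theory Submission
  imports Defs "HOL-Algebra.Coset"
begin

unbundle no m_inv_syntax

lemma Bset_subset_Nset: "Bset Q \<Omega> \<subseteq> Nset (Q :: ('c \<Rightarrow> 'c) set) \<Omega>"
proof
  fix H assume "H \<in> Bset Q \<Omega>"
  then obtain f :: "('c \<Rightarrow> bool) \<Rightarrow> bool" where "H = Stab Q \<Omega> f"
    by (auto simp: Bset_def)
  moreover have "Stab Q \<Omega> f = Stab Q \<Omega> (\<lambda>x. of_bool (f x) :: nat)"
    by (simp add: Stab_def of_bool_eq_iff)
  ultimately show "H \<in> Nset Q \<Omega>"
    by (auto simp: Nset_def)
qed

lemma beta_Suc_diag_le:
  assumes "subgrp H Q" "finite H" "H \<in> Bset Q \<Omega>"
  shows "beta I Q \<Omega> (Suc d) H H \<le> beta I Q \<Omega> d H H"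
proof -
  have "admissible Q \<Omega> H H (1, \<lambda>_. H, \<lambda>_. H, \<lambda>_. H, \<lambda>_. H)"
    using assms Bset_subset_Nset by (force simp: admissible_def subgrp_def conj_core_def)
  then have "beta I Q \<Omega> (Suc d) H H \<le> enat (idx H H) * beta I Q \<Omega> d H H"
    by (auto intro!: INF_lower2 simp: lessThan_Suc)
  moreover have "card H > 0"
    using assms by (auto simp: subgrp_def card_gt_0_iff)
  then have "idx H H = 1"
    by (simp add: idx_def)
  ultimately show ?thesis
    by (metis mult_1 one_enat_def)
qed

lemma beta_lim_eq_INF:
  assumes "decseq (\<lambda>d. beta I Q \<Omega> d H K)"
  shows "beta_lim I Q \<Omega> H K = (INF d. beta I Q \<Omega> d H K)"
  unfolding beta_lim_def using LIMSEQ_INF[OF assms] by (rule limI)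

lemma beta_0_le_enat:
  assumes "H \<noteq> Q" "beta I Q \<Omega> 0 H K \<le> enat N"
  shows "1 \<le> N" "\<exists>i\<in>I. H = Stab Q \<Omega> (\<lambda>x. x i)"
  using assms by (auto split: if_splits simp: one_enat_def)

lemma beta_Suc_le_enatE:
  assumes "beta I Q \<Omega> (Suc d) H K \<le> enat N"
  obtains r Hs Us Ls Vs where "admissible Q \<Omega> H K (r, Hs, Us, Ls, Vs)"
    and "\<And>i. i < r \<Longrightarrow> enat (idx (Hs i) (Us i)) * beta I Q \<Omega> d (Us i) (Vs i) \<le> enat N"
proof -
  have "beta I Q \<Omega> (Suc d) H K < enat (Suc N)"
    using assms by (simp del: beta.simps add: le_less_trans)
  then obtain r Hs Us Ls Vs where adm: "admissible Q \<Omega> H K (r, Hs, Us, Ls, Vs)"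
    and lt: "(SUP i\<in>{..<r}. enat (idx (Hs i) (Us i)) * beta I Q \<Omega> d (Us i) (Vs i)) < enat (Suc N)"
    by (auto simp: INF_less_iff)
  have "enat (idx (Hs i) (Us i)) * beta I Q \<Omega> d (Us i) (Vs i) \<le> enat N" if "i < r" for i
  proof -
    have "enat (idx (Hs i) (Us i)) * beta I Q \<Omega> d (Us i) (Vs i) < enat (Suc N)"
      using lt that by (meson SUP_upper lessThan_iff le_less_trans)
    then show ?thesis
      by (cases "enat (idx (Hs i) (Us i)) * beta I Q \<Omega> d (Us i) (Vs i)") auto
  qed
  with adm show thesis by (rule that)
qed

lemma root_bound_le_sum_of_prod_Suc:
  fixes e :: "nat \<Rightarrow> nat"
  assumes "d \<ge> 1" "k \<le> (\<Prod>l<d. Suc (e l))"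
  shows "real d * (real k powr (1 / real d) - 1) \<le> real (\<Sum>l<d. e l)"
proof -
  have "real k powr (1 / real d) \<le> real (\<Prod>l<d. Suc (e l)) powr (1 / real d)"
    using assms(2) by (intro powr_mono2) (simp_all del: of_nat_prod)
  also have "\<dots> \<le> (\<Sum>l<d. real (Suc (e l)) / real d)"
    using arith_geom_mean[of "{..<d}" "\<lambda>l. real (Suc (e l))"] assms(1)
    by (simp add: lessThan_empty_iff)
  also have "\<dots> = (real d + real (\<Sum>l<d. e l)) / real d"
    by (simp add: sum_divide_distrib[symmetric] sum.distrib)
  finally show ?thesis
    using assms(1) by (simp add: field_simps)
qed

lemma log2_le_sum_of_prod_Suc:
  fixes e :: "nat \<Rightarrow> nat"
  assumes "1 \<le> k" "k \<le> (\<Prod>l<d. Suc (e l))"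
  shows "log 2 (real k) \<le> real (\<Sum>l<d. e l)"
proof -
  have "k \<le> (\<Prod>l<d. 2 ^ e l)"
    using assms(2) prod_mono[of "{..<d}" "\<lambda>l. Suc (e l)" "\<lambda>l. 2 ^ e l"]
    by (simp add: Suc_leI less_exp)
  then have "real k \<le> 2 ^ (\<Sum>l<d. e l)"
    by (metis power_sum of_nat_le_iff of_nat_numeral of_nat_power)
  then have "real k \<le> 2 powr real (\<Sum>l<d. e l)"
    by (subst powr_realpow) simp_all
  then show ?thesis
    using assms(1) by (simp add: log_le_iff)
qed

lemma act_id: "act id x = x"
  by (simp add: act_def)

lemma act_comp: "bij q \<Longrightarrow> bij r \<Longrightarrow> act (q \<circ> r) x = act q (act r x)"
  by (simp add: act_def o_inv_distrib comp_assoc)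

lemma subgrp_subset: "subgrp H Q \<Longrightarrow> H \<subseteq> Q"
  and subgrp_id: "subgrp H Q \<Longrightarrow> id \<in> H"
  and subgrp_comp: "subgrp H Q \<Longrightarrow> a \<in> H \<Longrightarrow> b \<in> H \<Longrightarrow> a \<circ> b \<in> H"
  and subgrp_inv: "subgrp H Q \<Longrightarrow> a \<in> H \<Longrightarrow> inv a \<in> H"
  by (simp_all add: subgrp_def)

locale abelian_perm_pgroup =
  fixes Q :: "('c \<Rightarrow> 'c) set" and p n :: nat
  assumes subgrp_Q: "subgrp Q Q"
    and bij_Q: "q \<in> Q \<Longrightarrow> bij q"
    and comm_Q: "q \<in> Q \<Longrightarrow> r \<in> Q \<Longrightarrow> q \<circ> r = r \<circ> q"
    and prime_p: "prime p"
    and card_Q: "card Q = p ^ n"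
begin

lemma id_in_Q: "id \<in> Q"
  and comp_in_Q: "q \<in> Q \<Longrightarrow> r \<in> Q \<Longrightarrow> q \<circ> r \<in> Q"
  and inv_in_Q: "q \<in> Q \<Longrightarrow> inv q \<in> Q"
  using subgrp_Q by (auto simp: subgrp_def)

lemma inv_comp_cancel: "q \<in> Q \<Longrightarrow> inv q \<circ> q = id"
  by (simp add: bij_Q bij_is_inj)

lemma comp_inv_cancel: "q \<in> Q \<Longrightarrow> q \<circ> inv q = id"
  by (meson bij_Q bij_is_surj surj_iff)

lemma finite_Q: "finite Q"
  using card_Q prime_p by (metis card.infinite not_prime_0 power_not_zero)

lemma finite_subgrp: "subgrp H Q \<Longrightarrow> finite H"
  using finite_Q subgrp_subset finite_subset by blast

definition perm_group :: "('c \<Rightarrow> 'c) monoid" where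
  "perm_group = \<lparr>carrier = Q, mult = (\<circ>), one = id\<rparr>"

lemma group_perm_group: "group perm_group"
proof (rule groupI)
  fix q assume "q \<in> carrier perm_group"
  then show "\<exists>r\<in>carrier perm_group. r \<otimes>\<^bsub>perm_group\<^esub> q = \<one>\<^bsub>perm_group\<^esub>"
    using inv_in_Q inv_comp_cancel by (auto simp: perm_group_def)
qed (auto simp: perm_group_def comp_in_Q id_in_Q comp_assoc)

lemma m_inv_perm_group: "q \<in> Q \<Longrightarrow> m_inv perm_group q = inv q"
  using group.inv_equality[OF group_perm_group, of "inv q" q] inv_in_Q inv_comp_cancel
  by (simp add: perm_group_def)

lemma subgroup_perm_group: "subgrp H Q \<Longrightarrow> subgroup H perm_group"
  using subgrp_subset[of H Q] m_inv_perm_group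
  by (intro group.subgroupI[OF group_perm_group]) (auto simp: subgrp_def perm_group_def)

lemma card_subgrp_prime_power: "subgrp H Q \<Longrightarrow> \<exists>i. card H = p ^ i"
proof -
  assume "subgrp H Q"
  then have "card H dvd p ^ n"
    using group.lagrange[OF group_perm_group subgroup_perm_group] card_Q
    by (metis dvd_triv_right order_def partial_object.select_convs(1) perm_group_def)
  then show ?thesis
    using divides_primepow_nat[OF prime_p] by blast
qed

lemma card_subgrp_index:
  assumes "subgrp U Q" "subgrp H Q" "U \<subseteq> H"
  obtains e where "card H = p ^ e * card U"
proof -
  obtain a b where ab: "card U = p ^ a" "card H = p ^ b"
    using card_subgrp_prime_power assms(1,2) by metis
  have "p ^ a \<le> p ^ b"
    using card_mono[OF finite_subgrp[OF assms(2)] assms(3)] ab by simp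
  then have "a \<le> b"
    using prime_gt_1_nat[OF prime_p] by simp
  then have "card H = p ^ (b - a) * card U"
    using ab by (simp flip: power_add)
  then show thesis
    by (rule that)
qed

lemma card_psubgrp:
  assumes "subgrp A Q" "subgrp B Q" "A \<subset> B"
  shows "card A * p \<le> card B"
proof -
  obtain e where e: "card B = p ^ e * card A"
    using card_subgrp_index assms by blast
  have "card A < card B"
    using psubset_card_mono[OF finite_subgrp[OF assms(2)] assms(3)] .
  then have "e \<noteq> 0"
    using e by (metis mult_1 power_0 less_irrefl)
  then have "p \<le> p ^ e"
    using prime_gt_0_nat[OF prime_p] by (simp add: self_le_power)
  then show ?thesis
    using e by (simp add: mult.commute)
qed

lemma subset_conj_core: "H \<subseteq> Q \<Longrightarrow> U \<subseteq> Q \<Longrightarrow> U \<subseteq> conj_core H U"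
  unfolding conj_core_def
proof (intro subsetI INT_I)
  fix u h assume "H \<subseteq> Q" "U \<subseteq> Q" "u \<in> U" "h \<in> H"
  then have "u \<in> Q" "h \<in> Q"
    by blast+
  then have "inv h \<circ> u \<circ> h = (inv h \<circ> h) \<circ> u"
    using comm_Q[of u h] by (simp add: comp_assoc)
  also have "\<dots> = u"
    using \<open>h \<in> Q\<close> inv_comp_cancel by simp
  finally have "inv h \<circ> u \<circ> h = u" .
  with \<open>u \<in> U\<close> show "u \<in> (\<lambda>u. inv h \<circ> u \<circ> h) ` U"
    by (metis image_eqI)
qed

lemma subgrp_Stab:
  assumes "\<And>q x. q \<in> Q \<Longrightarrow> x \<in> \<Omega> \<Longrightarrow> act q x \<in> \<Omega>"
  shows "subgrp (Stab Q \<Omega> f) Q"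
  unfolding subgrp_def
proof (intro conjI ballI)
  show "Stab Q \<Omega> f \<subseteq> Q" "id \<in> Stab Q \<Omega> f"
    by (auto simp: Stab_def id_in_Q act_id)
next
  fix a b assume "a \<in> Stab Q \<Omega> f" "b \<in> Stab Q \<Omega> f"
  then show "a \<circ> b \<in> Stab Q \<Omega> f"
    using assms by (simp add: Stab_def act_comp bij_Q comp_in_Q)
next
  fix a assume a: "a \<in> Stab Q \<Omega> f"
  have "f (act (inv a) x) = f x" if "x \<in> \<Omega>" for x
  proof -
    have "act a (act (inv a) x) = x"
      using a by (simp add: Stab_def act_id bij_Q inv_in_Q comp_inv_cancel flip: act_comp)
    then show ?thesis
      using a assms[of "inv a" x] that inv_in_Q by (auto simp: Stab_def)
  qed
  then show "inv a \<in> Stab Q \<Omega> f"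
    using a inv_in_Q by (simp add: Stab_def)
qed

lemma subgrp_set_mult:
  assumes A: "subgrp A Q" and B: "subgrp B Q"
  shows "subgrp {a \<circ> b |a b. a \<in> A \<and> b \<in> B} Q"
  unfolding subgrp_def
proof (intro conjI ballI)
  show "{a \<circ> b |a b. a \<in> A \<and> b \<in> B} \<subseteq> Q"
    using subgrp_subset[OF A] subgrp_subset[OF B] comp_in_Q by blast
  have "id = id \<circ> id"
    by simp
  then show "id \<in> {a \<circ> b |a b. a \<in> A \<and> b \<in> B}"
    using subgrp_id[OF A] subgrp_id[OF B] by blast
next
  fix x y assume "x \<in> {a \<circ> b |a b. a \<in> A \<and> b \<in> B}" "y \<in> {a \<circ> b |a b. a \<in> A \<and> b \<in> B}"
  then obtain a b a' b' where x: "x = a \<circ> b" "a \<in> A" "b \<in> B" and y: "y = a' \<circ> b'" "a' \<in> A" "b' \<in> B"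
    by blast
  have "b \<circ> a' = a' \<circ> b"
    using comm_Q x(3) y(2) subgrp_subset[OF A] subgrp_subset[OF B] by blast
  then have "x \<circ> y = (a \<circ> a') \<circ> (b \<circ> b')"
    using x(1) y(1) by (metis comp_assoc)
  then show "x \<circ> y \<in> {a \<circ> b |a b. a \<in> A \<and> b \<in> B}"
    using subgrp_comp[OF A x(2) y(2)] subgrp_comp[OF B x(3) y(3)] by blast
next
  fix x assume "x \<in> {a \<circ> b |a b. a \<in> A \<and> b \<in> B}"
  then obtain a b where x: "x = a \<circ> b" "a \<in> A" "b \<in> B"
    by blast
  then have "a \<in> Q" "b \<in> Q"
    using subgrp_subset[OF A] subgrp_subset[OF B] by blast+
  then have "inv x = inv a \<circ> inv b"
    using x(1) by (simp add: o_inv_distrib bij_Q comm_Q inv_in_Q)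
  then show "inv x \<in> {a \<circ> b |a b. a \<in> A \<and> b \<in> B}"
    using subgrp_inv[OF A x(2)] subgrp_inv[OF B x(3)] by blast
qed

end

locale block_separation = abelian_perm_pgroup Q p n
  for Q :: "('c \<Rightarrow> 'c) set" and p n +
  fixes J :: "'j set" and W :: "'j \<Rightarrow> 'c set"
begin

definition agrees_on :: "'j \<Rightarrow> ('c \<Rightarrow> 'c) \<Rightarrow> ('c \<Rightarrow> 'c) \<Rightarrow> bool" where
  "agrees_on j h x \<longleftrightarrow> (\<forall>c\<in>W j. h c = x c)"

definition separates :: "('c \<Rightarrow> 'c) set \<Rightarrow> ('c \<Rightarrow> 'c) \<Rightarrow> 'j set \<Rightarrow> bool" where
  "separates H x A \<longleftrightarrow> (\<forall>h\<in>H. \<exists>j\<in>A. \<not> agrees_on j h x)"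

definition cert_cplx_le :: "('c \<Rightarrow> 'c) set \<Rightarrow> nat \<Rightarrow> bool" where
  "cert_cplx_le H t \<longleftrightarrow> (\<forall>x\<in>Q - H. \<exists>A\<subseteq>J. card A \<le> t \<and> separates H x A)"

definition kernel_on :: "('c \<Rightarrow> 'c) set \<Rightarrow> 'j set \<Rightarrow> ('c \<Rightarrow> 'c) set" where
  "kernel_on H B = {h \<in> H. \<forall>j\<in>B. agrees_on j h id}"

lemma agrees_on_refl [simp]: "agrees_on j h h"
  by (simp add: agrees_on_def)

lemma agrees_on_sym: "agrees_on j h x \<Longrightarrow> agrees_on j x h"
  by (simp add: agrees_on_def)

lemma agrees_on_trans: "agrees_on j h x \<Longrightarrow> agrees_on j x y \<Longrightarrow> agrees_on j h y"
  by (simp add: agrees_on_def)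

lemma agrees_on_comp_left: "agrees_on j h x \<Longrightarrow> agrees_on j (c \<circ> h) (c \<circ> x)"
  by (simp add: agrees_on_def)

lemma agrees_on_inv_id: "q \<in> Q \<Longrightarrow> agrees_on j q id \<Longrightarrow> agrees_on j (inv q) id"
  using agrees_on_comp_left[of j q id "inv q"] inv_comp_cancel[of q]
  by (simp add: agrees_on_sym)

lemma agrees_on_comp_id: "agrees_on j a id \<Longrightarrow> agrees_on j b id \<Longrightarrow> agrees_on j (a \<circ> b) id"
  using agrees_on_comp_left[of j b id a] agrees_on_trans[of j "a \<circ> b" a id] by simp

lemma subgrp_kernel_on:
  assumes "subgrp H Q"
  shows "subgrp (kernel_on H B) Q"
  unfolding subgrp_def
proof (intro conjI ballI)
  show "kernel_on H B \<subseteq> Q" "id \<in> kernel_on H B"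
    using assms by (auto simp: kernel_on_def subgrp_def)
next
  fix a b assume "a \<in> kernel_on H B" "b \<in> kernel_on H B"
  then show "a \<circ> b \<in> kernel_on H B"
    using assms by (auto simp: kernel_on_def subgrp_def intro: agrees_on_comp_id)
next
  fix a assume "a \<in> kernel_on H B"
  then show "inv a \<in> kernel_on H B"
    using assms by (auto simp: kernel_on_def subgrp_def intro: agrees_on_inv_id)
qed

lemma cert_cplx_le_mono: "cert_cplx_le H t \<Longrightarrow> t \<le> t' \<Longrightarrow> cert_cplx_le H t'"
  unfolding cert_cplx_le_def by (meson order_trans)

lemma cert_cplx_le_kernel_on_singleton: "j \<in> J \<Longrightarrow> cert_cplx_le (kernel_on Q {j}) 1"
  unfolding cert_cplx_le_def
proof
  fix x assume "j \<in> J" "x \<in> Q - kernel_on Q {j}"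
  then have "\<not> agrees_on j x id"
    by (simp add: kernel_on_def)
  have "\<not> agrees_on j h x" if "h \<in> kernel_on Q {j}" for h
  proof
    assume "agrees_on j h x"
    moreover have "agrees_on j h id"
      using that by (simp add: kernel_on_def)
    ultimately show False
      using \<open>\<not> agrees_on j x id\<close> agrees_on_sym agrees_on_trans by metis
  qed
  then have "separates (kernel_on Q {j}) x {j}"
    by (simp add: separates_def)
  with \<open>j \<in> J\<close> show "\<exists>A\<subseteq>J. card A \<le> 1 \<and> separates (kernel_on Q {j}) x A"
    by (intro exI[of _ "{j}"]) auto
qed

lemma cert_cplx_le_Inter:
  assumes H: "H = Q \<inter> (\<Inter>i\<in>S. Hs i)"
    and cert: "\<And>i. i \<in> S \<Longrightarrow> Hs i \<noteq> Q \<Longrightarrow> cert_cplx_le (Hs i) t"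
  shows "cert_cplx_le H t"
  unfolding cert_cplx_le_def
proof
  fix x assume x: "x \<in> Q - H"
  then obtain i where i: "i \<in> S" "x \<notin> Hs i"
    using H by blast
  then obtain A where "A \<subseteq> J" "card A \<le> t" "separates (Hs i) x A"
    using cert[OF i(1)] x unfolding cert_cplx_le_def by blast
  moreover have "H \<subseteq> Hs i"
    using H i(1) by blast
  ultimately show "\<exists>A\<subseteq>J. card A \<le> t \<and> separates H x A"
    unfolding separates_def by blast
qed

lemma not_in_kernel_on_mult:
  assumes "H \<subseteq> Q" "U \<subseteq> Q" "separates U x B" "s \<in> Q" "\<And>j. j \<in> B \<Longrightarrow> agrees_on j s x"
  shows "s \<notin> {z \<circ> u |z u. z \<in> kernel_on H B \<and> u \<in> U}"
proof
  assume "s \<in> {z \<circ> u |z u. z \<in> kernel_on H B \<and> u \<in> U}"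
  then obtain z u where zu: "s = z \<circ> u" "z \<in> kernel_on H B" "u \<in> U"
    by blast
  then have zQ: "z \<in> Q" and uQ: "u \<in> Q"
    using assms(1,2) by (auto simp: kernel_on_def)
  have "s \<circ> inv z = u \<circ> (z \<circ> inv z)"
    using zu(1) comm_Q[OF zQ uQ] by (metis comp_assoc)
  then have u: "u = s \<circ> inv z"
    using comp_inv_cancel[OF zQ] by simp
  have "agrees_on j u x" if "j \<in> B" for j
  proof -
    have "agrees_on j (inv z) id"
      using agrees_on_inv_id[OF zQ] zu(2) that by (simp add: kernel_on_def)
    then have "agrees_on j u s"
      using agrees_on_comp_left[of j "inv z" id s] u by simp
    then show ?thesis
      using agrees_on_trans assms(5)[OF that] by blast
  qed
  then show False
    using assms(3) zu(3) unfolding separates_def by blast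
qed

lemma separates_translate:
  assumes H: "subgrp H Q" and s: "s \<in> H" "\<And>j. j \<in> B \<Longrightarrow> agrees_on j s x"
    and ker: "kernel_on H B \<subseteq> H'" and C: "separates H' (inv s \<circ> x) C"
  shows "separates H x (B \<union> C)"
  unfolding separates_def
proof
  fix h assume h: "h \<in> H"
  show "\<exists>j\<in>B \<union> C. \<not> agrees_on j h x"
  proof (rule ccontr)
    assume "\<not> (\<exists>j\<in>B \<union> C. \<not> agrees_on j h x)"
    then have ag: "\<And>j. j \<in> B \<union> C \<Longrightarrow> agrees_on j h x"
      by blast
    have sQ: "s \<in> Q"
      using subgrp_subset[OF H] s(1) by blast
    have "agrees_on j (inv s \<circ> h) id" if "j \<in> B" for j
    proof -
      have "agrees_on j h s"
        using ag[of j] s(2)[OF that] that agrees_on_sym agrees_on_trans by blast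
      then have "agrees_on j (inv s \<circ> h) (inv s \<circ> s)"
        by (rule agrees_on_comp_left)
      then show ?thesis
        using inv_comp_cancel[OF sQ] by simp
    qed
    moreover have "inv s \<circ> h \<in> H"
      using subgrp_comp[OF H subgrp_inv[OF H s(1)] h] .
    ultimately have "inv s \<circ> h \<in> H'"
      using ker by (auto simp: kernel_on_def)
    moreover have "agrees_on j (inv s \<circ> h) (inv s \<circ> x)" if "j \<in> C" for j
      using ag[of j] that agrees_on_comp_left by blast
    ultimately show False
      using C unfolding separates_def by blast
  qed
qed

lemma kernel_on_mult:
  fixes B :: "'j set"
  assumes U: "subgrp U Q" and H: "subgrp H Q" and "U \<subseteq> H"
  defines "H' \<equiv> {z \<circ> u |z u. z \<in> kernel_on H B \<and> u \<in> U}"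
  shows "subgrp H' Q" "U \<subseteq> H'" "kernel_on H B \<subseteq> H'" "H' \<subseteq> H"
proof -
  show "subgrp H' Q"
    unfolding H'_def using subgrp_set_mult subgrp_kernel_on H U by blast
  have "id \<in> kernel_on H B"
    using subgrp_id[OF H] by (simp add: kernel_on_def)
  moreover have "u = id \<circ> u" for u :: "'c \<Rightarrow> 'c"
    by simp
  ultimately show "U \<subseteq> H'"
    unfolding H'_def by blast
  have "z = z \<circ> id" for z :: "'c \<Rightarrow> 'c"
    by simp
  then show "kernel_on H B \<subseteq> H'"
    unfolding H'_def using subgrp_id[OF U] by blast
  show "H' \<subseteq> H"
    unfolding H'_def kernel_on_def using subgrp_comp[OF H] \<open>U \<subseteq> H\<close> by blast
qed

lemma cert_cplx_le_step:
  assumes U: "subgrp U Q" and H: "subgrp H Q" and "U \<subseteq> H" and cU: "cert_cplx_le U t"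
    and below: "\<And>H'. subgrp H' Q \<Longrightarrow> U \<subseteq> H' \<Longrightarrow> card H' * p \<le> card H \<Longrightarrow> cert_cplx_le H' t'"
  shows "cert_cplx_le H (t + t')"
  unfolding cert_cplx_le_def
proof
  fix x assume x: "x \<in> Q - H"
  then obtain B where B: "B \<subseteq> J" "card B \<le> t" "separates U x B"
    using cU \<open>U \<subseteq> H\<close> unfolding cert_cplx_le_def by blast
  show "\<exists>A\<subseteq>J. card A \<le> t + t' \<and> separates H x A"
  proof (cases "separates H x B")
    case True
    with B show ?thesis
      by (intro exI[of _ B]) auto
  next
    case False
    then obtain s where s: "s \<in> H" "\<And>j. j \<in> B \<Longrightarrow> agrees_on j s x"
      unfolding separates_def by blast
    have sQ: "s \<in> Q"
      using subgrp_subset[OF H] s(1) by blast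
    \<comment> \<open>\<open>H'\<close> misses \<open>s\<close>, as \<open>B\<close> separates \<open>U\<close> from \<open>x\<close>;
      so \<open>H'\<close> has index at least \<open>p\<close> in \<open>H\<close>\<close>
    define H' where "H' = {z \<circ> u |z u. z \<in> kernel_on H B \<and> u \<in> U}"
    note H' = kernel_on_mult[OF U H \<open>U \<subseteq> H\<close>, where B = B, folded H'_def]
    have "s \<notin> H'"
      unfolding H'_def
      using not_in_kernel_on_mult subgrp_subset[OF H] subgrp_subset[OF U] B(3) sQ s(2) by blast
    then have "card H' * p \<le> card H"
      using card_psubgrp[OF H'(1) H] H'(4) s(1) by blast
    then have cH': "cert_cplx_le H' t'"
      using below H'(1,2) by blast
    have "inv s \<circ> x \<notin> H'"
    proof
      assume "inv s \<circ> x \<in> H'"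
      then have "s \<circ> (inv s \<circ> x) \<in> H"
        using subgrp_comp[OF H s(1)] H'(4) by blast
      then show False
        using x comp_inv_cancel[OF sQ] by (simp flip: comp_assoc)
    qed
    moreover have "inv s \<circ> x \<in> Q"
      using comp_in_Q inv_in_Q sQ x by blast
    ultimately obtain C where C: "C \<subseteq> J" "card C \<le> t'" "separates H' (inv s \<circ> x) C"
      using cH' unfolding cert_cplx_le_def by blast
    have "separates H x (B \<union> C)"
      using separates_translate[OF H s H'(3) C(3)] .
    moreover have "card (B \<union> C) \<le> t + t'"
      using card_Un_le[of B C] B(2) C(2) by linarith
    ultimately show ?thesis
      using B(1) C(1) by (intro exI[of _ "B \<union> C"]) auto
  qed
qed

lemma cert_cplx_le_lift:
  assumes U: "subgrp U Q" and cU: "cert_cplx_le U t"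
  shows "subgrp H Q \<Longrightarrow> U \<subseteq> H \<Longrightarrow> card H \<le> p ^ e * card U \<Longrightarrow> cert_cplx_le H (Suc e * t)"
proof (induction e arbitrary: H)
  case 0
  then have "U = H"
    using card_seteq[OF finite_subgrp[OF "0.prems"(1)] "0.prems"(2)] by simp
  with cU show ?case
    by simp
next
  case (Suc e)
  have "cert_cplx_le H (t + Suc e * t)"
  proof (rule cert_cplx_le_step[OF U Suc.prems(1,2) cU])
    fix H' assume H': "subgrp H' Q" "U \<subseteq> H'" "card H' * p \<le> card H"
    have "card H \<le> (p ^ e * card U) * p"
      using Suc.prems(3) by (simp add: mult_ac)
    with H'(3) have "card H' * p \<le> (p ^ e * card U) * p"
      by (rule le_trans)
    then have "card H' \<le> p ^ e * card U"
      by (metis mult_le_cancel2 prime_gt_0_nat prime_p)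
    then show "cert_cplx_le H' (Suc e * t)"
      using Suc.IH H'(1,2) by blast
  qed
  then show ?case
    by simp
qed

lemma cert_cplx_le_of_admissible_component:
  assumes Hi: "subgrp Hi Q" and Ui: "subgrp Ui Q" and core: "conj_core Hi Ui \<subseteq> Hi" and "Hi \<noteq> Q"
    and le: "enat (idx Hi Ui) * b \<le> enat N"
    and IH: "\<And>N'. Ui \<noteq> Q \<Longrightarrow> b \<le> enat N' \<Longrightarrow>
               \<exists>e. cert_cplx_le Ui (\<Prod>l<d. Suc (e l)) \<and> p ^ (\<Sum>l<d. e l) \<le> N'"
  shows "\<exists>e. cert_cplx_le Hi (\<Prod>l<Suc d. Suc (e l)) \<and> p ^ (\<Sum>l<Suc d. e l) \<le> N"
proof -
  have "Ui \<subseteq> Hi"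
    using subset_conj_core[OF subgrp_subset[OF Hi] subgrp_subset[OF Ui]] core by blast
  then have "Ui \<noteq> Q"
    using \<open>Hi \<noteq> Q\<close> subgrp_subset[OF Hi] by blast
  obtain e0 where e0: "card Hi = p ^ e0 * card Ui"
    using card_subgrp_index[OF Ui Hi \<open>Ui \<subseteq> Hi\<close>] .
  have "card Ui > 0"
    using finite_subgrp[OF Ui] subgrp_id[OF Ui] card_gt_0_iff by blast
  then have idx: "idx Hi Ui = p ^ e0"
    using e0 \<open>Ui \<subseteq> Hi\<close> by (simp add: idx_def Int_absorb1)
  obtain N' where N': "b = enat N'" "p ^ e0 * N' \<le> N"
  proof (cases b)
    case (enat N')
    then show ?thesis
      using le idx that by simp
  next
    case infinity
    then show ?thesis
      using le idx prime_gt_0_nat[OF prime_p] by simp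
  qed
  obtain e' where e': "cert_cplx_le Ui (\<Prod>l<d. Suc (e' l))" "p ^ (\<Sum>l<d. e' l) \<le> N'"
    using IH[OF \<open>Ui \<noteq> Q\<close>] N'(1) by blast
  define e where "e = case_nat e0 e'"
  have "cert_cplx_le Hi (Suc e0 * (\<Prod>l<d. Suc (e' l)))"
    using cert_cplx_le_lift[OF Ui e'(1) Hi \<open>Ui \<subseteq> Hi\<close>] e0 by simp
  moreover have "(\<Prod>l<Suc d. Suc (e l)) = Suc e0 * (\<Prod>l<d. Suc (e' l))"
    unfolding prod.lessThan_Suc_shift by (simp add: e_def)
  moreover have "p ^ (\<Sum>l<Suc d. e l) \<le> N"
  proof -
    have "p ^ (\<Sum>l<Suc d. e l) = p ^ e0 * p ^ (\<Sum>l<d. e' l)"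
      unfolding sum.lessThan_Suc_shift by (simp add: e_def power_add)
    also have "\<dots> \<le> p ^ e0 * N'"
      using e'(2) by simp
    finally show ?thesis
      using N'(2) by simp
  qed
  ultimately show ?thesis
    by metis
qed

lemma cert_cplx_le_of_beta_le:
  assumes coord: "\<And>i. i \<in> I \<Longrightarrow> \<exists>j\<in>J. Stab Q \<Omega> (\<lambda>x. x i) = kernel_on Q {j}"
  shows "H \<noteq> Q \<Longrightarrow> beta I Q \<Omega> d H K \<le> enat N \<Longrightarrow>
    \<exists>e. cert_cplx_le H (\<Prod>l<d. Suc (e l)) \<and> p ^ (\<Sum>l<d. e l) \<le> N"
proof (induction d arbitrary: H K N)
  case 0
  then obtain i where "i \<in> I" "H = Stab Q \<Omega> (\<lambda>x. x i)" "1 \<le> N"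
    using beta_0_le_enat by metis
  then show ?case
    using coord cert_cplx_le_kernel_on_singleton by fastforce
next
  case (Suc d)
  obtain r Hs Us Ls Vs where adm: "admissible Q \<Omega> H K (r, Hs, Us, Ls, Vs)"
    and le: "\<And>i. i < r \<Longrightarrow> enat (idx (Hs i) (Us i)) * beta I Q \<Omega> d (Us i) (Vs i) \<le> enat N"
    using beta_Suc_le_enatE[OF Suc.prems(2)] by blast
  have H: "H = Q \<inter> (\<Inter>i\<in>{..<r}. Hs i)"
    using adm by (simp add: admissible_def)
  define S where "S = {i. i < r \<and> Hs i \<noteq> Q}"
  have "\<exists>e. cert_cplx_le (Hs i) (\<Prod>l<Suc d. Suc (e l)) \<and> p ^ (\<Sum>l<Suc d. e l) \<le> N"
    if "i \<in> S" for i
  proof (rule cert_cplx_le_of_admissible_component[OF _ _ _ _ le Suc.IH])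
    show "subgrp (Hs i) Q" "subgrp (Us i) Q" "conj_core (Hs i) (Us i) \<subseteq> Hs i" "Hs i \<noteq> Q" "i < r"
      using adm that by (auto simp: admissible_def S_def)
  qed
  then obtain E where E: "\<And>i. i \<in> S \<Longrightarrow>
      cert_cplx_le (Hs i) (\<Prod>l<Suc d. Suc (E i l)) \<and> p ^ (\<Sum>l<Suc d. E i l) \<le> N"
    by metis
  define T where "T i = (\<Prod>l<Suc d. Suc (E i l))" for i
  have "S \<noteq> {}"
    using H Suc.prems(1) by (auto simp: S_def)
  moreover have "finite S"
    by (simp add: S_def)
  ultimately obtain i0 where i0: "i0 \<in> S" "T i0 = Max (T ` S)"
    using Max_in[of "T ` S"] by fastforce
  have "cert_cplx_le H (\<Prod>l<Suc d. Suc (E i0 l))"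
    unfolding T_def[symmetric]
  proof (rule cert_cplx_le_Inter[OF H])
    fix i assume "i \<in> {..<r}" "Hs i \<noteq> Q"
    then have "i \<in> S"
      by (simp add: S_def)
    then show "cert_cplx_le (Hs i) (T i0)"
      using E[of i] cert_cplx_le_mono Max_ge[of "T ` S"] \<open>finite S\<close> i0(2) T_def by auto
  qed
  with E[OF i0(1)] show ?case
    by blast
qed

end

locale cyclic_regular_blocks =
  fixes p k :: nat and Cp :: "(nat \<Rightarrow> nat) set"
  assumes p_prime: "prime p" and k_pos: "k \<ge> 1"
    and Cp_permutes: "\<forall>x\<in>Cp. x permutes {..<p}"
    and Cp_powers: "\<exists>g. Cp = range (\<lambda>i. g ^^ i)"
    and Cp_card: "card Cp = p"
    and Cp_regular: "\<forall>a<p. \<forall>b<p. \<exists>!x. x \<in> Cp \<and> x a = b"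
begin

lemma p_ge_2: "p \<ge> 2"
  using p_prime prime_ge_2_nat by blast

lemma Cp_bij: "c \<in> Cp \<Longrightarrow> bij c"
  using Cp_permutes permutes_bij by blast

lemma Cp_comp_inv: "c \<in> Cp \<Longrightarrow> c \<circ> inv c = id"
  using surj_iff[THEN iffD1, OF bij_is_surj[OF Cp_bij]] .

lemma Cp_inv_comp: "c \<in> Cp \<Longrightarrow> inv c \<circ> c = id"
  using inv_o_cancel[OF bij_is_inj[OF Cp_bij]] .

lemma Cp_less: "c \<in> Cp \<Longrightarrow> a < p \<Longrightarrow> c a < p"
  using Cp_permutes permutes_in_image[of c "{..<p}" a] by simp

lemma id_in_Cp: "id \<in> Cp"
proof -
  obtain g where "Cp = range (\<lambda>i. g ^^ i)"
    using Cp_powers by blast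
  then have "g ^^ 0 \<in> Cp"
    by blast
  then show ?thesis
    by simp
qed

lemma Cp_comp: "c \<in> Cp \<Longrightarrow> d \<in> Cp \<Longrightarrow> c \<circ> d \<in> Cp"
  and Cp_comm: "c \<in> Cp \<Longrightarrow> d \<in> Cp \<Longrightarrow> c \<circ> d = d \<circ> c"
proof -
  obtain g where g: "Cp = range (\<lambda>i. g ^^ i)"
    using Cp_powers by blast
  assume "c \<in> Cp" "d \<in> Cp"
  then obtain i j where "c = g ^^ i" "d = g ^^ j"
    using g by blast
  then have "c \<circ> d = g ^^ (i + j)" "d \<circ> c = g ^^ (i + j)"
    by (simp_all flip: funpow_add add: add.commute)
  then show "c \<circ> d \<in> Cp" "c \<circ> d = d \<circ> c"
    using g by simp_all
qed

lemma Cp_eq_if_eq_at: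
  assumes "c \<in> Cp" "d \<in> Cp" "a < p" "c a = d a"
  shows "c = d"
proof -
  have "\<exists>!x. x \<in> Cp \<and> x a = c a"
    using Cp_regular Cp_less[OF assms(1,3)] assms(3) by simp
  then obtain x where "\<forall>y. y \<in> Cp \<and> y a = c a \<longrightarrow> y = x"
    by (rule ex1E) simp
  with assms show ?thesis
    by metis
qed

lemma Cp_inv:
  assumes "c \<in> Cp"
  shows "inv c \<in> Cp"
proof -
  have "0 < p" "c 0 < p"
    using p_ge_2 Cp_less[OF assms] by simp_all
  then have "\<exists>!d. d \<in> Cp \<and> d (c 0) = 0"
    using Cp_regular by simp
  then obtain d where d: "d \<in> Cp" "d (c 0) = 0"
    using ex1_implies_ex by blast
  then have "d \<circ> c = id"
    using Cp_eq_if_eq_at[OF Cp_comp[OF d(1) assms] id_in_Cp \<open>0 < p\<close>] by simp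
  moreover have "c \<circ> d = id"
    using calculation Cp_comm[OF assms d(1)] by simp
  ultimately have "inv c = d"
    by (rule inv_unique_comp[rotated])
  with d(1) show ?thesis
    by simp
qed

lemma Cp_nontrivial: "\<exists>c\<in>Cp. c \<noteq> id"
proof -
  have "0 < p" "1 < p"
    using p_ge_2 by simp_all
  then have "\<exists>!c. c \<in> Cp \<and> c 0 = 1"
    using Cp_regular by simp
  then obtain c where "c \<in> Cp" "c 0 = 1"
    using ex1_implies_ex by blast
  then show ?thesis
    by (metis id_apply zero_neq_one)
qed

definition Cpk :: "(nat \<Rightarrow> nat \<Rightarrow> nat) set" where
  "Cpk = {x. \<forall>j<k. x j \<in> Cp}"

lemma Cpk_comp: "x \<in> Cpk \<Longrightarrow> y \<in> Cpk \<Longrightarrow> (\<lambda>j. x j \<circ> y j) \<in> Cpk"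
  and Cpk_inv: "x \<in> Cpk \<Longrightarrow> (\<lambda>j. inv (x j)) \<in> Cpk"
  and Cpk_id: "(\<lambda>_. id) \<in> Cpk"
  by (simp_all add: Cpk_def Cp_comp Cp_inv id_in_Cp)

lemma qperm_apply: "j < k \<Longrightarrow> a < p \<Longrightarrow> b < p \<Longrightarrow> qperm k p x (j, a, b) = (j, x j a, b)"
  by (simp add: qperm_def)

lemma qperm_outside: "\<not> (j < k \<and> a < p \<and> b < p) \<Longrightarrow> qperm k p x (j, a, b) = (j, a, b)"
  by (auto simp: qperm_def)

lemma qperm_id: "qperm k p (\<lambda>_. id) = id"
  by (auto simp: qperm_def)

lemma qperm_cong: "(\<And>j. j < k \<Longrightarrow> x j = y j) \<Longrightarrow> qperm k p x = qperm k p y"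
  by (auto simp: qperm_def fun_eq_iff)

lemma qperm_comp:
  assumes "y \<in> Cpk"
  shows "qperm k p x \<circ> qperm k p y = qperm k p (\<lambda>j. x j \<circ> y j)"
proof
  fix c :: "nat \<times> nat \<times> nat"
  obtain j a b where c: "c = (j, a, b)"
    by (cases c) auto
  show "(qperm k p x \<circ> qperm k p y) c = qperm k p (\<lambda>j. x j \<circ> y j) c"
  proof (cases "j < k \<and> a < p \<and> b < p")
    case True
    then have "y j a < p"
      using assms Cp_less by (simp add: Cpk_def)
    with True show ?thesis
      by (simp add: c qperm_apply)
  qed (simp add: c qperm_outside)
qed

lemma qperm_eq_iff:
  assumes "x \<in> Cpk" "y \<in> Cpk"
  shows "qperm k p x = qperm k p y \<longleftrightarrow> (\<forall>j<k. x j = y j)"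
proof
  assume eq: "qperm k p x = qperm k p y"
  show "\<forall>j<k. x j = y j"
  proof (intro allI impI)
    fix j assume "j < k"
    have "qperm k p x (j, 0, 0) = qperm k p y (j, 0, 0)"
      using eq by simp
    then have "x j 0 = y j 0"
      using \<open>j < k\<close> p_ge_2 by (simp add: qperm_apply)
    then show "x j = y j"
      using assms \<open>j < k\<close> p_ge_2 Cp_eq_if_eq_at[of "x j" "y j" 0] by (simp add: Cpk_def)
  qed
qed (auto intro: qperm_cong)

lemma qperm_comp_inv: "x \<in> Cpk \<Longrightarrow> qperm k p x \<circ> qperm k p (\<lambda>j. inv (x j)) = id"
proof -
  assume x: "x \<in> Cpk"
  have "qperm k p x \<circ> qperm k p (\<lambda>j. inv (x j)) = qperm k p (\<lambda>j. x j \<circ> inv (x j))"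
    using qperm_comp[OF Cpk_inv[OF x]] .
  also have "\<dots> = qperm k p (\<lambda>_. id)"
    using x by (intro qperm_cong) (simp add: Cpk_def Cp_comp_inv)
  finally show ?thesis
    by (simp add: qperm_id)
qed

lemma qperm_inv_comp: "x \<in> Cpk \<Longrightarrow> qperm k p (\<lambda>j. inv (x j)) \<circ> qperm k p x = id"
proof -
  assume x: "x \<in> Cpk"
  have "qperm k p (\<lambda>j. inv (x j)) \<circ> qperm k p x = qperm k p (\<lambda>j. inv (x j) \<circ> x j)"
    using qperm_comp[OF x] .
  also have "\<dots> = qperm k p (\<lambda>_. id)"
    using x by (intro qperm_cong) (simp add: Cpk_def Cp_inv_comp)
  finally show ?thesis
    by (simp add: qperm_id)
qed

lemma qperm_inv: "x \<in> Cpk \<Longrightarrow> inv (qperm k p x) = qperm k p (\<lambda>j. inv (x j))"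
  using qperm_comp_inv qperm_inv_comp by (rule inv_unique_comp)

lemma Qgrp_eq: "Qgrp k p Cp = qperm k p ` Cpk"
  by (auto simp: Qgrp_def Cpk_def)

lemma card_Qgrp: "card (Qgrp k p Cp) = p ^ k"
proof -
  have "Qgrp k p Cp = qperm k p ` (PiE {..<k} (\<lambda>_. Cp))"
  proof
    show "Qgrp k p Cp \<subseteq> qperm k p ` (PiE {..<k} (\<lambda>_. Cp))"
    proof
      fix q assume "q \<in> Qgrp k p Cp"
      then obtain x where x: "x \<in> Cpk" "q = qperm k p x"
        by (auto simp: Qgrp_eq)
      then have "q = qperm k p (restrict x {..<k})" "restrict x {..<k} \<in> PiE {..<k} (\<lambda>_. Cp)"
        by (auto simp: Cpk_def intro: qperm_cong)
      then show "q \<in> qperm k p ` (PiE {..<k} (\<lambda>_. Cp))"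
        by blast
    qed
  qed (auto simp: Qgrp_eq Cpk_def)
  moreover have "inj_on (qperm k p) (PiE {..<k} (\<lambda>_. Cp))"
  proof (rule inj_onI)
    fix x y assume xy: "x \<in> PiE {..<k} (\<lambda>_. Cp)" "y \<in> PiE {..<k} (\<lambda>_. Cp)"
      "qperm k p x = qperm k p y"
    then have "\<forall>j<k. x j = y j"
      using qperm_eq_iff[of x y] by (auto simp: Cpk_def)
    with xy(1,2) show "x = y"
      by (metis PiE_ext lessThan_iff)
  qed
  ultimately show ?thesis
    by (simp add: card_image card_PiE Cp_card)
qed

lemma abelian_perm_pgroup_Qgrp: "abelian_perm_pgroup (Qgrp k p Cp) p k"
proof
  show "subgrp (Qgrp k p Cp) (Qgrp k p Cp)"
    unfolding subgrp_def
  proof (intro conjI ballI)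
    show "id \<in> Qgrp k p Cp"
      using qperm_id Cpk_id by (metis Qgrp_eq image_eqI)
  next
    fix a b assume "a \<in> Qgrp k p Cp" "b \<in> Qgrp k p Cp"
    then obtain x y where "x \<in> Cpk" "y \<in> Cpk" "a = qperm k p x" "b = qperm k p y"
      by (auto simp: Qgrp_eq)
    then show "a \<circ> b \<in> Qgrp k p Cp"
      using qperm_comp Cpk_comp by (simp add: Qgrp_eq)
  next
    fix a assume "a \<in> Qgrp k p Cp"
    then obtain x where "x \<in> Cpk" "a = qperm k p x"
      by (auto simp: Qgrp_eq)
    then show "inv a \<in> Qgrp k p Cp"
      using qperm_inv Cpk_inv by (simp add: Qgrp_eq)
  qed simp
next
  fix q assume "q \<in> Qgrp k p Cp"
  then obtain x where "x \<in> Cpk" "q = qperm k p x"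
    by (auto simp: Qgrp_eq)
  then show "bij q"
    using qperm_comp_inv qperm_inv_comp Cpk_inv by (metis o_bij)
next
  fix q r assume "q \<in> Qgrp k p Cp" "r \<in> Qgrp k p Cp"
  then obtain x y where x: "x \<in> Cpk" "q = qperm k p x" and y: "y \<in> Cpk" "r = qperm k p y"
    by (auto simp: Qgrp_eq)
  have "qperm k p (\<lambda>j. x j \<circ> y j) = qperm k p (\<lambda>j. y j \<circ> x j)"
    using x(1) y(1) by (intro qperm_cong) (simp add: Cpk_def Cp_comm)
  then show "q \<circ> r = r \<circ> q"
    using x y by (simp add: qperm_comp)
qed (use p_prime card_Qgrp in simp_all)

\<comment> \<open>block \<open>j\<close> is observed at the points \<open>(j, a, 0)\<close>, where \<open>qperm k p x\<close> acts by \<open>x j\<close>\<close>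
sublocale block_separation "Qgrp k p Cp" p k "{..<k}" "\<lambda>j. (\<lambda>a. (j, a, 0)) ` {..<p}"
  by (rule block_separation.intro[OF abelian_perm_pgroup_Qgrp])

lemma agrees_on_qperm:
  assumes "j < k" "x \<in> Cpk" "y \<in> Cpk"
  shows "agrees_on j (qperm k p x) (qperm k p y) \<longleftrightarrow> x j = y j"
proof -
  have "agrees_on j (qperm k p x) (qperm k p y) \<longleftrightarrow> (\<forall>a<p. x j a = y j a)"
    using assms(1) p_ge_2 by (auto simp: agrees_on_def qperm_apply)
  also have "\<dots> \<longleftrightarrow> x j = y j"
    using Cp_eq_if_eq_at[of "x j" "y j" 0] assms p_ge_2 by (auto simp: Cpk_def)
  finally show ?thesis .
qed

lemma pmats_apply: "pmats k p x (j, a, b) \<longleftrightarrow> j < k \<and> a < p \<and> b < p \<and> a = x j b"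
  by (simp add: pmats_def)

lemma Omega_eq: "Omega k p Cp = pmats k p ` Cpk"
  by (auto simp: Omega_def Cpk_def)

lemma act_qperm_pmats:
  assumes "y \<in> Cpk" "x \<in> Cpk"
  shows "act (qperm k p y) (pmats k p x) = pmats k p (\<lambda>j. y j \<circ> x j)"
proof
  fix c :: "nat \<times> nat \<times> nat"
  obtain j a b where c: "c = (j, a, b)"
    by (cases c) auto
  show "act (qperm k p y) (pmats k p x) c = pmats k p (\<lambda>j. y j \<circ> x j) c"
  proof (cases "j < k \<and> a < p \<and> b < p")
    case True
    then have yj: "y j \<in> Cp"
      using assms(1) by (simp add: Cpk_def)
    then have "inv (y j) a < p"
      using True Cp_inv Cp_less by blast
    moreover have "inv (y j) a = x j b \<longleftrightarrow> a = y j (x j b)"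
      using bij_inv_eq_iff[OF Cp_bij[OF yj], of "x j b" a] by auto
    ultimately show ?thesis
      using True by (simp add: act_def c qperm_inv[OF assms(1)] qperm_apply pmats_apply)
  next
    case False
    then show ?thesis
      by (auto simp: act_def c qperm_inv[OF assms(1)] qperm_outside pmats_apply)
  qed
qed

lemma pmats_eq_iff:
  assumes "x \<in> Cpk" "y \<in> Cpk"
  shows "pmats k p x = pmats k p y \<longleftrightarrow> (\<forall>j<k. x j = y j)"
proof
  assume eq: "pmats k p x = pmats k p y"
  show "\<forall>j<k. x j = y j"
  proof (intro allI impI)
    fix j assume "j < k"
    then have xj: "x j \<in> Cp" "y j \<in> Cp"
      using assms by (simp_all add: Cpk_def)
    then have "pmats k p x (j, x j 0, 0)"
      using \<open>j < k\<close> p_ge_2 Cp_less by (simp add: pmats_apply)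
    then have "x j 0 = y j 0"
      using eq by (simp add: pmats_apply)
    then show "x j = y j"
      using Cp_eq_if_eq_at[OF xj, of 0] p_ge_2 by simp
  qed
qed (auto simp: pmats_def fun_eq_iff)

lemma act_in_Omega: "q \<in> Qgrp k p Cp \<Longrightarrow> M \<in> Omega k p Cp \<Longrightarrow> act q M \<in> Omega k p Cp"
  by (auto simp: Qgrp_eq Omega_eq act_qperm_pmats Cpk_comp)

lemma Stab_coord_eq_kernel_on:
  assumes "(j, a, b) \<in> coords k p"
  shows "Stab (Qgrp k p Cp) (Omega k p Cp) (\<lambda>M. M (j, a, b)) = kernel_on (Qgrp k p Cp) {j}"
proof (intro equalityI subsetI)
  have jab: "j < k" "a < p" "b < p"
    using assms by (auto simp: coords_def)
  fix q assume q: "q \<in> Stab (Qgrp k p Cp) (Omega k p Cp) (\<lambda>M. M (j, a, b))"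
  then obtain y where y: "y \<in> Cpk" "q = qperm k p y"
    by (auto simp: Stab_def Qgrp_eq)
  have "\<exists>!c. c \<in> Cp \<and> c b = a"
    using Cp_regular jab by simp
  then obtain c where c: "c \<in> Cp" "c b = a"
    using ex1_implies_ex by blast
  define x where "x = (\<lambda>_. id)(j := c)"
  have x: "x \<in> Cpk"
    using c id_in_Cp by (simp add: x_def Cpk_def)
  have "act q (pmats k p x) (j, a, b) = pmats k p x (j, a, b)"
    using q x by (auto simp: Stab_def Omega_eq)
  moreover have "pmats k p x (j, a, b)"
    using jab c by (simp add: pmats_apply x_def)
  ultimately have "pmats k p (\<lambda>i. y i \<circ> x i) (j, a, b)"
    by (simp add: y(2) act_qperm_pmats[OF y(1) x])
  then have "y j a = a"
    using c by (simp add: pmats_apply x_def)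
  then have "y j = id"
    using Cp_eq_if_eq_at[of "y j" id a] y(1) jab id_in_Cp by (simp add: Cpk_def)
  then have "agrees_on j q id"
    using agrees_on_qperm[OF jab(1) y(1) Cpk_id] by (simp add: y(2) qperm_id)
  then show "q \<in> kernel_on (Qgrp k p Cp) {j}"
    using q by (simp add: kernel_on_def Stab_def)
next
  have jab: "j < k" "a < p" "b < p"
    using assms by (auto simp: coords_def)
  fix q assume q: "q \<in> kernel_on (Qgrp k p Cp) {j}"
  then obtain y where y: "y \<in> Cpk" "q = qperm k p y"
    by (auto simp: kernel_on_def Qgrp_eq)
  have "agrees_on j q id"
    using q by (simp add: kernel_on_def)
  then have "y j = id"
    using agrees_on_qperm[OF jab(1) y(1) Cpk_id] by (simp add: y(2) qperm_id)
  then have "act q M (j, a, b) = M (j, a, b)" if "M \<in> Omega k p Cp" for M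
    using that y by (auto simp: Omega_eq act_qperm_pmats pmats_apply)
  then show "q \<in> Stab (Qgrp k p Cp) (Omega k p Cp) (\<lambda>M. M (j, a, b))"
    using q by (simp add: Stab_def kernel_on_def)
qed

definition blockprod :: "(nat \<Rightarrow> nat \<Rightarrow> nat) \<Rightarrow> nat \<Rightarrow> nat" where
  "blockprod x = foldr (\<circ>) (map x [0..<k]) id"

lemma foldr_comp_in_Cp: "(\<And>j. j \<in> set ns \<Longrightarrow> x j \<in> Cp) \<Longrightarrow> foldr (\<circ>) (map x ns) id \<in> Cp"
  by (induction ns) (simp_all add: id_in_Cp Cp_comp)

lemma foldr_comp_Cons: "foldr (\<circ>) (map f (a # ns)) id = f a \<circ> foldr (\<circ>) (map f ns) id"
  by simp

lemma foldr_comp_pointwise: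
  "(\<And>j. j \<in> set ns \<Longrightarrow> x j \<in> Cp \<and> y j \<in> Cp) \<Longrightarrow>
    foldr (\<circ>) (map (\<lambda>j. x j \<circ> y j) ns) id = foldr (\<circ>) (map x ns) id \<circ> foldr (\<circ>) (map y ns) id"
proof (induction ns)
  case (Cons a ns)
  let ?X = "foldr (\<circ>) (map x ns) id" and ?Y = "foldr (\<circ>) (map y ns) id"
  have comm: "y a \<circ> ?X = ?X \<circ> y a"
    using Cons.prems by (intro Cp_comm foldr_comp_in_Cp) simp_all
  have IH: "foldr (\<circ>) (map (\<lambda>j. x j \<circ> y j) ns) id = ?X \<circ> ?Y"
    by (rule Cons.IH) (use Cons.prems in simp)
  have "(x a \<circ> y a) \<circ> (?X \<circ> ?Y) = x a \<circ> ((y a \<circ> ?X) \<circ> ?Y)"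
    by (simp only: comp_assoc)
  also have "\<dots> = (x a \<circ> ?X) \<circ> (y a \<circ> ?Y)"
    by (simp only: comm comp_assoc)
  finally show ?case
    unfolding foldr_comp_Cons IH .
qed simp

lemma foldr_comp_update:
  "distinct ns \<Longrightarrow> j \<in> set ns \<Longrightarrow> c \<in> Cp \<Longrightarrow> (\<And>i. i \<in> set ns \<Longrightarrow> x i \<in> Cp) \<Longrightarrow>
    foldr (\<circ>) (map (x(j := c \<circ> x j)) ns) id = c \<circ> foldr (\<circ>) (map x ns) id"
proof (induction ns)
  case (Cons a ns)
  let ?F = "foldr (\<circ>) (map x ns) id"
  show ?case
  proof (cases "a = j")
    case True
    with Cons.prems(1) have "map (x(j := c \<circ> x j)) ns = map x ns"
      by (auto intro: map_cong)
    with True show ?thesis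
      unfolding foldr_comp_Cons by (simp only: fun_upd_same comp_assoc)
  next
    case False
    then have IH: "foldr (\<circ>) (map (x(j := c \<circ> x j)) ns) id = c \<circ> ?F"
      using Cons.prems by (intro Cons.IH) auto
    have "x a \<circ> c = c \<circ> x a"
      using Cons.prems(3,4) Cp_comm by simp
    moreover have "(x(j := c \<circ> x j)) a = x a"
      using False by simp
    ultimately show ?thesis
      unfolding foldr_comp_Cons IH by (simp only: comp_assoc[symmetric])
  qed
qed simp

lemma blockprod_cong: "(\<And>j. j < k \<Longrightarrow> x j = y j) \<Longrightarrow> blockprod x = blockprod y"
  unfolding blockprod_def by (metis atLeastLessThan_iff map_cong set_upt)

lemma blockprod_id: "blockprod (\<lambda>_. id) = id"
proof -
  have "foldr (\<circ>) (map (\<lambda>_. id) ns) id = id" for ns :: "nat list"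
    by (induction ns) simp_all
  then show ?thesis
    by (simp add: blockprod_def)
qed

lemma blockprod_comp: "x \<in> Cpk \<Longrightarrow> y \<in> Cpk \<Longrightarrow> blockprod (\<lambda>j. x j \<circ> y j) = blockprod x \<circ> blockprod y"
  unfolding blockprod_def by (rule foldr_comp_pointwise) (simp add: Cpk_def)

lemma blockprod_update:
  "x \<in> Cpk \<Longrightarrow> j < k \<Longrightarrow> c \<in> Cp \<Longrightarrow> blockprod (x(j := c \<circ> x j)) = c \<circ> blockprod x"
  unfolding blockprod_def by (rule foldr_comp_update) (simp_all add: Cpk_def)

lemma Pgrp_eq: "Pgrp k p Cp = qperm k p ` {x \<in> Cpk. blockprod x = id}"
  by (auto simp: Pgrp_def Cpk_def blockprod_def)

lemma qperm_in_Pgrp_iff: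
  assumes "x \<in> Cpk"
  shows "qperm k p x \<in> Pgrp k p Cp \<longleftrightarrow> blockprod x = id"
proof
  assume "qperm k p x \<in> Pgrp k p Cp"
  then obtain y where "y \<in> Cpk" "blockprod y = id" "qperm k p x = qperm k p y"
    by (auto simp: Pgrp_eq)
  then show "blockprod x = id"
    using assms qperm_eq_iff blockprod_cong by metis
qed (use assms in \<open>simp add: Pgrp_eq\<close>)

definition trivial_product :: "(nat \<times> nat \<times> nat \<Rightarrow> bool) \<Rightarrow> bool" where
  "trivial_product M \<longleftrightarrow> M \<in> pmats k p ` {x \<in> Cpk. blockprod x = id}"

lemma trivial_product_pmats:
  assumes "x \<in> Cpk"
  shows "trivial_product (pmats k p x) \<longleftrightarrow> blockprod x = id"
proof
  assume "trivial_product (pmats k p x)"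
  then have "pmats k p x \<in> pmats k p ` {y \<in> Cpk. blockprod y = id}"
    by (simp only: trivial_product_def)
  then obtain y where y: "pmats k p x = pmats k p y" "y \<in> Cpk" "blockprod y = id"
    by (rule imageE) simp
  have "\<forall>j<k. x j = y j"
    using pmats_eq_iff[OF assms y(2), THEN iffD1, OF y(1)] .
  then have "blockprod x = blockprod y"
    by (intro blockprod_cong) simp
  with y(3) show "blockprod x = id"
    by simp
next
  assume "blockprod x = id"
  with assms show "trivial_product (pmats k p x)"
    unfolding trivial_product_def by (intro imageI) simp
qed

lemma Stab_trivial_product: "Stab (Qgrp k p Cp) (Omega k p Cp) trivial_product = Pgrp k p Cp"
proof (intro equalityI subsetI)
  fix q assume q: "q \<in> Stab (Qgrp k p Cp) (Omega k p Cp) trivial_product"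
  then obtain y where y: "y \<in> Cpk" "q = qperm k p y"
    by (auto simp: Stab_def Qgrp_eq)
  have "trivial_product (act q (pmats k p (\<lambda>_. id))) = trivial_product (pmats k p (\<lambda>_. id))"
    using q Cpk_id by (auto simp: Stab_def Omega_eq)
  then have "blockprod y = id"
    using y Cpk_id by (simp add: act_qperm_pmats trivial_product_pmats blockprod_id)
  then show "q \<in> Pgrp k p Cp"
    using y qperm_in_Pgrp_iff by simp
next
  fix q assume q: "q \<in> Pgrp k p Cp"
  then obtain y where y: "y \<in> Cpk" "blockprod y = id" "q = qperm k p y"
    by (auto simp: Pgrp_eq)
  have "trivial_product (act q M) = trivial_product M" if "M \<in> Omega k p Cp" for M
    using that y by (auto simp: Omega_eq act_qperm_pmats trivial_product_pmats blockprod_comp Cpk_comp)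
  moreover have "q \<in> Qgrp k p Cp"
    using y by (simp add: Qgrp_eq)
  ultimately show "q \<in> Stab (Qgrp k p Cp) (Omega k p Cp) trivial_product"
    by (simp add: Stab_def)
qed

lemma Pgrp_in_Bset: "Pgrp k p Cp \<in> Bset (Qgrp k p Cp) (Omega k p Cp)"
  unfolding Bset_def using Stab_trivial_product by blast

lemma subgrp_Pgrp: "subgrp (Pgrp k p Cp) (Qgrp k p Cp)"
  using subgrp_Stab[OF act_in_Omega, of trivial_product] by (simp add: Stab_trivial_product)

lemma k_le_cert_cplx_Pgrp:
  assumes "cert_cplx_le (Pgrp k p Cp) t"
  shows "k \<le> t"
proof (rule ccontr)
  assume "\<not> k \<le> t"
  obtain c where c: "c \<in> Cp" "c \<noteq> id"
    using Cp_nontrivial by blast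
  define x :: "nat \<Rightarrow> nat \<Rightarrow> nat" where "x = (\<lambda>_. id)(0 := c)"
  have x: "x \<in> Cpk"
    using c id_in_Cp by (simp add: x_def Cpk_def)
  have "blockprod x = c"
    using blockprod_update[OF Cpk_id, of 0 c] k_pos c(1) by (simp add: x_def blockprod_id)
  then have "qperm k p x \<in> Qgrp k p Cp - Pgrp k p Cp"
    using qperm_in_Pgrp_iff[OF x] x c(2) by (simp add: Qgrp_eq)
  then obtain A where A: "A \<subseteq> {..<k}" "card A \<le> t" "separates (Pgrp k p Cp) (qperm k p x) A"
    using assms by (auto simp: cert_cplx_le_def)
  then have "A \<noteq> {..<k}"
    using \<open>\<not> k \<le> t\<close> by auto
  then obtain j where j: "j < k" "j \<notin> A"
    using A(1) by auto
  \<comment> \<open>correcting the unobserved block \<open>j\<close> moves \<open>x\<close> into \<open>P\<close>\<close>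
  define y where "y = x(j := inv c \<circ> x j)"
  have y: "y \<in> Cpk"
    using x j(1) Cp_inv[OF c(1)] by (simp add: y_def Cpk_def Cp_comp)
  have "blockprod y = inv c \<circ> c"
    using blockprod_update[OF x j(1) Cp_inv[OF c(1)]] \<open>blockprod x = c\<close> by (simp add: y_def)
  then have "qperm k p y \<in> Pgrp k p Cp"
    using qperm_in_Pgrp_iff[OF y] Cp_inv_comp[OF c(1)] by simp
  moreover have "agrees_on i (qperm k p y) (qperm k p x)" if "i \<in> A" for i
    using that A(1) j agrees_on_qperm[OF _ y x] by (auto simp: y_def)
  ultimately show False
    using A(3) by (auto simp: separates_def)
qed

lemma beta_Pgrp_le_enatE:
  assumes "beta (coords k p) (Qgrp k p Cp) (Omega k p Cp) d (Pgrp k p Cp) (Pgrp k p Cp) \<le> enat N"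
  obtains e where "k \<le> (\<Prod>l<d. Suc (e l))" "p ^ (\<Sum>l<d. e l) \<le> N"
proof -
  have coord: "\<exists>j\<in>{..<k}. Stab (Qgrp k p Cp) (Omega k p Cp) (\<lambda>M. M i) = kernel_on (Qgrp k p Cp) {j}"
    if "i \<in> coords k p" for i
    using that Stab_coord_eq_kernel_on by (auto simp: coords_def)
  have "Pgrp k p Cp \<noteq> Qgrp k p Cp"
  proof
    assume "Pgrp k p Cp = Qgrp k p Cp"
    then have "cert_cplx_le (Pgrp k p Cp) 0"
      by (simp add: cert_cplx_le_def)
    then show False
      using k_le_cert_cplx_Pgrp[of 0] k_pos by simp
  qed
  then show thesis
    using cert_cplx_le_of_beta_le[OF coord _ assms] k_le_cert_cplx_Pgrp that by (meson order_trans)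
qed

lemma ereal_powr_le_beta_Pgrp:
  assumes "\<And>e. k \<le> (\<Prod>l<d. Suc (e l)) \<Longrightarrow> s \<le> real (\<Sum>l<d. e l)"
  shows "ereal (real p powr s)
    \<le> ereal_of_enat (beta (coords k p) (Qgrp k p Cp) (Omega k p Cp) d (Pgrp k p Cp) (Pgrp k p Cp))"
proof (cases "beta (coords k p) (Qgrp k p Cp) (Omega k p Cp) d (Pgrp k p Cp) (Pgrp k p Cp)")
  case (enat N)
  then have "beta (coords k p) (Qgrp k p Cp) (Omega k p Cp) d (Pgrp k p Cp) (Pgrp k p Cp) \<le> enat N"
    by simp
  then obtain e where e: "k \<le> (\<Prod>l<d. Suc (e l))" "p ^ (\<Sum>l<d. e l) \<le> N"
    by (rule beta_Pgrp_le_enatE)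
  have "real p powr s \<le> real p powr real (\<Sum>l<d. e l)"
    using assms[OF e(1)] p_ge_2 by (intro powr_mono) auto
  also have "\<dots> = real (p ^ (\<Sum>l<d. e l))"
    using p_ge_2 powr_realpow[of "real p" "\<Sum>l<d. e l"] by (simp del: of_nat_sum)
  also have "\<dots> \<le> real N"
    using e(2) by (simp only: of_nat_le_iff)
  finally show ?thesis
    using enat by simp
qed simp

lemma decseq_beta_Pgrp:
  "decseq (\<lambda>d. beta (coords k p) (Qgrp k p Cp) (Omega k p Cp) d (Pgrp k p Cp) (Pgrp k p Cp))"
  unfolding decseq_Suc_iff
  using beta_Suc_diag_le[OF subgrp_Pgrp finite_subgrp[OF subgrp_Pgrp] Pgrp_in_Bset] by blast

lemma beta_lim_Pgrp_attained:
  obtains d where "beta_lim (coords k p) (Qgrp k p Cp) (Omega k p Cp) (Pgrp k p Cp) (Pgrp k p Cp)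
    = beta (coords k p) (Qgrp k p Cp) (Omega k p Cp) d (Pgrp k p Cp) (Pgrp k p Cp)"
proof -
  let ?b = "\<lambda>d. beta (coords k p) (Qgrp k p Cp) (Omega k p Cp) d (Pgrp k p Cp) (Pgrp k p Cp)"
  \<comment> \<open>infima in \<open>enat\<close> are attained\<close>
  have "(LEAST b. b \<in> range ?b) \<in> range ?b"
    by (rule LeastI_ex) blast
  then have "(INF d. ?b d) \<in> range ?b"
    by (simp add: Inf_enat_def)
  moreover have "beta_lim (coords k p) (Qgrp k p Cp) (Omega k p Cp) (Pgrp k p Cp) (Pgrp k p Cp) = (INF d. ?b d)"
    by (rule beta_lim_eq_INF[OF decseq_beta_Pgrp])
  ultimately show thesis
    using that by auto
qed

end

theorem theorem6p18:
  fixes p k :: nat and Cp :: "(nat \<Rightarrow> nat) set"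
  assumes "prime p"
    and "k \<ge> 1"
    and "\<forall>x\<in>Cp. x permutes {..<p}"
    and "\<exists>g. Cp = range (\<lambda>i. g ^^ i)"
    and "card Cp = p"
    and "\<forall>a<p. \<forall>b<p. \<exists>!x. x \<in> Cp \<and> x a = b"
  shows "(\<forall>d\<ge>1. ereal (real p powr (real d * (real k powr (1 / real d) - 1)))
            \<le> ereal_of_enat (beta (coords k p) (Qgrp k p Cp) (Omega k p Cp) d (Pgrp k p Cp) (Pgrp k p Cp)))
        \<and> ereal (real p powr (log 2 (real k)))
            \<le> ereal_of_enat (beta_lim (coords k p) (Qgrp k p Cp) (Omega k p Cp) (Pgrp k p Cp) (Pgrp k p Cp))"
proof -
  interpret cyclic_regular_blocks p k Cp
    using assms by unfold_locales
  obtain d0 where d0: "beta_lim (coords k p) (Qgrp k p Cp) (Omega k p Cp) (Pgrp k p Cp) (Pgrp k p Cp)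
    = beta (coords k p) (Qgrp k p Cp) (Omega k p Cp) d0 (Pgrp k p Cp) (Pgrp k p Cp)"
    by (rule beta_lim_Pgrp_attained)
  show ?thesis
    unfolding d0
    using ereal_powr_le_beta_Pgrp root_bound_le_sum_of_prod_Suc log2_le_sum_of_prod_Suc k_pos
    by blast
qed

end
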